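(* Let $R$ be a commutative ring with unit, $\mathcal{P}$ a poset satisfying the descending chain condition, $F\colon\mathcal{P}\to R\text{-mod}$ a functor, and $i\in\mathcal{P}$. If the natural map $\operatorname{colim}_{\mathcal{P}_{<j}}F\to F(j)$ is injective for every $j\le i$, then $F$ is pseudo-projective at $j$ for every $j\le i$.
   Context: DCC: no infinite strictly descending chains. $\mathcal{P}_{<j}=\{k:k<j\}$, $\mathcal{P}_{\le j}=\{k:k\le j\}$. $F(k<j)$ is the image of the arrow $k\to j$, $F(j<j)=1$. $\operatorname{Im}_F(k)=\sum_{l<k}\operatorname{Im}F(l<k)$; $\max J$ is the set of maximal elements of $J$. $F$ is pseudo-projective at $j$ if for every finite $J\subset\mathcal{P}_{\le j}$ and every $\oplus_{k\in J}x_k\in\bigoplus_{k\in J}F(k)$ with $\sum_{k\in J}F(k<j)(x_k)=0$, one has $x_k\in\operatorname{Im}_F(k)$ for all $k\in\max J$. *)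

theory Defs
  imports "HOL-Algebra.Module" "HOL-Algebra.FiniteProduct"
begin

definition dcc :: "('p::order) itself \<Rightarrow> bool" where
  "dcc _ \<longleftrightarrow> \<not> (\<exists>s::nat \<Rightarrow> 'p. \<forall>n. s (Suc n) < s n)"

definition module_map ::
  "('r, 'c) ring_scheme \<Rightarrow> ('r, 'b) module \<Rightarrow> ('r, 'b) module \<Rightarrow> ('b \<Rightarrow> 'b) \<Rightarrow> bool" where
  "module_map R M N h \<longleftrightarrow>
     (\<forall>x\<in>carrier M. h x \<in> carrier N) \<and>
     (\<forall>x\<in>carrier M. \<forall>y\<in>carrier M. h (x \<oplus>\<^bsub>M\<^esub> y) = h x \<oplus>\<^bsub>N\<^esub> h y) \<and>
     (\<forall>a\<in>carrier R. \<forall>x\<in>carrier M. h (a \<odot>\<^bsub>M\<^esub> x) = a \<odot>\<^bsub>N\<^esub> h x)"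

definition poset_functor ::
  "('r, 'c) ring_scheme \<Rightarrow> ('p::order \<Rightarrow> ('r, 'b) module) \<Rightarrow> ('p \<Rightarrow> 'p \<Rightarrow> 'b \<Rightarrow> 'b) \<Rightarrow> bool" where
  "poset_functor R F f \<longleftrightarrow>
     (\<forall>k. module R (F k)) \<and>
     (\<forall>k l. k \<le> l \<longrightarrow> module_map R (F k) (F l) (f k l)) \<and>
     (\<forall>k. \<forall>x\<in>carrier (F k). f k k x = x) \<and>
     (\<forall>k l m. k \<le> l \<longrightarrow> l \<le> m \<longrightarrow> (\<forall>x\<in>carrier (F k). f k m x = f l m (f k l x)))"

text \<open>Elements of the direct sum of the F k over k < j: finitely supported families.\<close>
definition dsum_below :: "('p::order \<Rightarrow> ('r, 'b) module) \<Rightarrow> 'p \<Rightarrow> ('p \<Rightarrow> 'b) set" where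
  "dsum_below F j = {x. (\<forall>k. x k \<in> carrier (F k)) \<and> (\<forall>k. \<not> k < j \<longrightarrow> x k = \<zero>\<^bsub>F k\<^esub>)
                        \<and> finite {k. x k \<noteq> \<zero>\<^bsub>F k\<^esub>}}"

text \<open>The submodule of the direct sum generated by the colimit relations
  \<iota>_k(a) - \<iota>_l(F(k<l) a) for k < l < j; the colimit over P_{<j} is the quotient by it.\<close>
inductive_set colim_rel ::
  "('r, 'c) ring_scheme \<Rightarrow> ('p::order \<Rightarrow> ('r, 'b) module) \<Rightarrow> ('p \<Rightarrow> 'p \<Rightarrow> 'b \<Rightarrow> 'b) \<Rightarrow> 'p \<Rightarrow> ('p \<Rightarrow> 'b) set"
  for R F f j where
  zero: "(\<lambda>m. \<zero>\<^bsub>F m\<^esub>) \<in> colim_rel R F f j"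
| gen: "\<lbrakk>k < l; l < j; a \<in> carrier (F k)\<rbrakk> \<Longrightarrow>
     (\<lambda>m. if m = k then a else if m = l then \<ominus>\<^bsub>F l\<^esub> (f k l a) else \<zero>\<^bsub>F m\<^esub>) \<in> colim_rel R F f j"
| add: "\<lbrakk>x \<in> colim_rel R F f j; y \<in> colim_rel R F f j\<rbrakk> \<Longrightarrow>
     (\<lambda>m. x m \<oplus>\<^bsub>F m\<^esub> y m) \<in> colim_rel R F f j"
| smult: "\<lbrakk>a \<in> carrier R; x \<in> colim_rel R F f j\<rbrakk> \<Longrightarrow>
     (\<lambda>m. a \<odot>\<^bsub>F m\<^esub> x m) \<in> colim_rel R F f j"

text \<open>The natural map colim_{P_{<j}} F \<rightarrow> F(j), [x] \<mapsto> \<Sum>_k F(k<j)(x_k), is injective: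
  its kernel (on the direct sum) is contained in the relation submodule.\<close>
definition colim_map_inj ::
  "('r, 'c) ring_scheme \<Rightarrow> ('p::order \<Rightarrow> ('r, 'b) module) \<Rightarrow> ('p \<Rightarrow> 'p \<Rightarrow> 'b \<Rightarrow> 'b) \<Rightarrow> 'p \<Rightarrow> bool" where
  "colim_map_inj R F f j \<longleftrightarrow>
     (\<forall>x\<in>dsum_below F j.
        finsum (F j) (\<lambda>k. f k j (x k)) {k. x k \<noteq> \<zero>\<^bsub>F k\<^esub>} = \<zero>\<^bsub>F j\<^esub> \<longrightarrow> x \<in> colim_rel R F f j)"

definition Im_F :: "('p::order \<Rightarrow> ('r, 'b) module) \<Rightarrow> ('p \<Rightarrow> 'p \<Rightarrow> 'b \<Rightarrow> 'b) \<Rightarrow> 'p \<Rightarrow> 'b set" where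
  "Im_F F f k = {finsum (F k) (\<lambda>l. f l k (y l)) L | L y.
                   finite L \<and> L \<subseteq> {l. l < k} \<and> (\<forall>l\<in>L. y l \<in> carrier (F l))}"

definition pseudo_projective ::
  "('p::order \<Rightarrow> ('r, 'b) module) \<Rightarrow> ('p \<Rightarrow> 'p \<Rightarrow> 'b \<Rightarrow> 'b) \<Rightarrow> 'p \<Rightarrow> bool" where
  "pseudo_projective F f j \<longleftrightarrow>
     (\<forall>J x. finite J \<longrightarrow> J \<subseteq> {k. k \<le> j} \<longrightarrow> (\<forall>k\<in>J. x k \<in> carrier (F k)) \<longrightarrow>
        finsum (F j) (\<lambda>k. f k j (x k)) J = \<zero>\<^bsub>F j\<^esub> \<longrightarrow>
        (\<forall>k\<in>J. (\<forall>l\<in>J. \<not> k < l) \<longrightarrow> x k \<in> Im_F F f k))"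

end

theory Submission
  imports Defs "HOL-Library.Multiset"
begin

(* An element of colim_rel R F f j is a finite sum of elementary relations
   e_k(a) - e_l(F(k<l) a) with k < l < j; such sums are recorded as lists of triples (k, l, a),
   so that the multiset of targets l is a well-founded measure (by DCC).
   Let v be such a sum with all targets <= i that vanishes strictly above k, and let P be the part of
   v consisting of the relations whose target m is maximal.  At m, v agrees with P, whose m-component
   is minus the image of its source components.  If this component is 0, injectivity of
   colim_{<m} F -> F(m) rewrites P as a sum of relations with targets below m, and the measure drops.
   Otherwise k < m is impossible, so either k = m and v_k = P_m lies in Im_F(k), or k is not <= m and
   P, which only touches m and points below m, can be dropped.  Hence v_k is in Im_F(k), which
   gives pseudo-projectivity: if j is not in J, the family x lies in the kernel of the natural map,
   and if j is in J, then x_j = - sum_{k<j} F(k<j) x_k. *)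

lemma (in abelian_group) a_inv_zero [simp]: "\<ominus> \<zero> = \<zero>"
  by (rule minus_equality) simp_all

lemma (in abelian_group) finsum_negf:
  assumes "finite A" "g \<in> A \<rightarrow> carrier G"
  shows "finsum G (\<lambda>x. \<ominus> g x) A = \<ominus> finsum G g A"
  using assms
proof (induction A rule: finite_induct)
  case (insert x A)
  then have "g x \<in> carrier G" "g \<in> A \<rightarrow> carrier G" by auto
  moreover have "(\<lambda>x. \<ominus> g x) \<in> A \<rightarrow> carrier G" using insert by auto
  ultimately show ?case using insert by (simp add: minus_add a_comm)
qed simp

lemma dcc_imp_wf_less: "dcc TYPE('p::order) \<Longrightarrow> wf {(a, b). (a::'p) < b}"
  unfolding dcc_def wf_iff_no_infinite_down_chain by auto

lemma mult_replace_filtered: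
  assumes "m \<in> t ` set gs" "\<forall>h\<in>set hs. t h < m"
  shows "(mset (map t (filter (\<lambda>g. t g \<noteq> m) gs @ hs)), mset (map t gs)) \<in> mult {(a, b). a < b}"
proof -
  let ?P = "mset (map t (filter (\<lambda>g. t g = m) gs))"
  let ?Q = "mset (map t (filter (\<lambda>g. t g \<noteq> m) gs))"
  have "m \<in># ?P" using assms(1) by auto
  then have "(?Q + mset (map t hs), ?Q + ?P) \<in> mult {(a, b). a < b}"
    using assms(2) by (intro one_step_implies_mult) auto
  moreover have "mset (map t gs) = ?Q + ?P" by (induction gs) auto
  ultimately show ?thesis by simp
qed

fun rel_vec :: "('p::order \<Rightarrow> ('r, 'b) module) \<Rightarrow> ('p \<Rightarrow> 'p \<Rightarrow> 'b \<Rightarrow> 'b) \<Rightarrow> 'p \<times> 'p \<times> 'b \<Rightarrow> 'p \<Rightarrow> 'b"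
  where "rel_vec F f (k, l, a) m =
    (if m = k then a else if m = l then \<ominus>\<^bsub>F l\<^esub> f k l a else \<zero>\<^bsub>F m\<^esub>)"

fun rel_sum :: "('p::order \<Rightarrow> ('r, 'b) module) \<Rightarrow> ('p \<Rightarrow> 'p \<Rightarrow> 'b \<Rightarrow> 'b) \<Rightarrow> ('p \<times> 'p \<times> 'b) list \<Rightarrow> 'p \<Rightarrow> 'b"
  where
    "rel_sum F f [] m = \<zero>\<^bsub>F m\<^esub>"
  | "rel_sum F f (g # gs) m = rel_vec F f g m \<oplus>\<^bsub>F m\<^esub> rel_sum F f gs m"

definition valid_rels :: "('p::order \<Rightarrow> ('r, 'b) module) \<Rightarrow> ('p \<Rightarrow> bool) \<Rightarrow> ('p \<times> 'p \<times> 'b) list \<Rightarrow> bool"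
  where "valid_rels F T gs \<longleftrightarrow> (\<forall>(k, l, a) \<in> set gs. k < l \<and> T l \<and> a \<in> carrier (F k))"

abbreviation rel_target :: "'p \<times> 'p \<times> 'b \<Rightarrow> 'p"
  where "rel_target g \<equiv> fst (snd g)"

lemma valid_rels_simps [simp]:
  "valid_rels F T []"
  "valid_rels F T ((k, l, a) # gs) \<longleftrightarrow> k < l \<and> T l \<and> a \<in> carrier (F k) \<and> valid_rels F T gs"
  "valid_rels F T (gs @ hs) \<longleftrightarrow> valid_rels F T gs \<and> valid_rels F T hs"
  unfolding valid_rels_def by (simp_all add: ball_Un)

lemma valid_rels_memD:
  "valid_rels F T gs \<Longrightarrow> (k, l, a) \<in> set gs \<Longrightarrow> k < l \<and> T l \<and> a \<in> carrier (F k)"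
  unfolding valid_rels_def by auto

lemma valid_rels_filter: "valid_rels F T gs \<Longrightarrow> valid_rels F T (filter p gs)"
  unfolding valid_rels_def by auto

lemma valid_rels_mono: "valid_rels F T gs \<Longrightarrow> (\<And>l. T l \<Longrightarrow> T' l) \<Longrightarrow> valid_rels F T' gs"
  unfolding valid_rels_def by auto

locale module_functor =
  fixes R :: "('r, 'c) ring_scheme" and F :: "'p::order \<Rightarrow> ('r, 'b) module"
    and f :: "'p \<Rightarrow> 'p \<Rightarrow> 'b \<Rightarrow> 'b"
  assumes is_functor: "poset_functor R F f"
begin

lemma module_F: "module R (F k)"
  using is_functor by (simp add: poset_functor_def)

lemma map_closed: "k \<le> l \<Longrightarrow> x \<in> carrier (F k) \<Longrightarrow> f k l x \<in> carrier (F l)"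
  using is_functor unfolding poset_functor_def module_map_def by blast

lemma map_add:
  "k \<le> l \<Longrightarrow> x \<in> carrier (F k) \<Longrightarrow> y \<in> carrier (F k) \<Longrightarrow>
    f k l (x \<oplus>\<^bsub>F k\<^esub> y) = f k l x \<oplus>\<^bsub>F l\<^esub> f k l y"
  using is_functor unfolding poset_functor_def module_map_def by blast

lemma map_smult:
  "k \<le> l \<Longrightarrow> c \<in> carrier R \<Longrightarrow> x \<in> carrier (F k) \<Longrightarrow> f k l (c \<odot>\<^bsub>F k\<^esub> x) = c \<odot>\<^bsub>F l\<^esub> f k l x"
  using is_functor unfolding poset_functor_def module_map_def by blast

lemma map_id: "x \<in> carrier (F k) \<Longrightarrow> f k k x = x"
  using is_functor unfolding poset_functor_def by blast

lemma map_zero: "k \<le> l \<Longrightarrow> f k l \<zero>\<^bsub>F k\<^esub> = \<zero>\<^bsub>F l\<^esub>"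
proof -
  assume kl: "k \<le> l"
  interpret K: module R "F k" by (rule module_F)
  interpret L: module R "F l" by (rule module_F)
  have "f k l \<zero>\<^bsub>F k\<^esub> \<oplus>\<^bsub>F l\<^esub> f k l \<zero>\<^bsub>F k\<^esub> = f k l \<zero>\<^bsub>F k\<^esub>"
    using map_add[OF kl, of "\<zero>\<^bsub>F k\<^esub>" "\<zero>\<^bsub>F k\<^esub>"] by simp
  then show ?thesis
    using map_closed[OF kl K.zero_closed] by (metis L.add.r_cancel_one')
qed

lemma map_neg: "k \<le> l \<Longrightarrow> x \<in> carrier (F k) \<Longrightarrow> f k l (\<ominus>\<^bsub>F k\<^esub> x) = \<ominus>\<^bsub>F l\<^esub> f k l x"
proof -
  assume kl: "k \<le> l" and x: "x \<in> carrier (F k)"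
  interpret K: module R "F k" by (rule module_F)
  interpret L: module R "F l" by (rule module_F)
  have "f k l (\<ominus>\<^bsub>F k\<^esub> x) \<oplus>\<^bsub>F l\<^esub> f k l x = \<zero>\<^bsub>F l\<^esub>"
    using map_add[OF kl, of "\<ominus>\<^bsub>F k\<^esub> x" x] x map_zero[OF kl] by (simp add: K.l_neg)
  then show ?thesis
    using map_closed[OF kl] x by (metis K.add.inv_closed L.add.inv_equality)
qed

lemma zero_in_Im_F: "\<zero>\<^bsub>F k\<^esub> \<in> Im_F F f k"
proof -
  interpret K: module R "F k" by (rule module_F)
  show ?thesis
    unfolding Im_F_def by (rule CollectI, rule exI[of _ "{}"], rule exI[of _ "\<lambda>_. undefined"]) simp
qed

lemma neg_finsum_in_Im_F:
  assumes "finite L" "L \<subseteq> {l. l < k}" "\<forall>l\<in>L. y l \<in> carrier (F l)"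
  shows "\<ominus>\<^bsub>F k\<^esub> finsum (F k) (\<lambda>l. f l k (y l)) L \<in> Im_F F f k"
proof -
  interpret K: module R "F k" by (rule module_F)
  have "\<ominus>\<^bsub>F k\<^esub> finsum (F k) (\<lambda>l. f l k (y l)) L = finsum (F k) (\<lambda>l. \<ominus>\<^bsub>F k\<^esub> f l k (y l)) L"
    using assms map_closed by (intro K.finsum_negf[symmetric]) auto
  also have "\<dots> = finsum (F k) (\<lambda>l. f l k (\<ominus>\<^bsub>F l\<^esub> y l)) L"
    using assms map_closed map_neg by (intro K.finsum_cong') auto
  finally have sum_eq: "\<ominus>\<^bsub>F k\<^esub> finsum (F k) (\<lambda>l. f l k (y l)) L = finsum (F k) (\<lambda>l. f l k (\<ominus>\<^bsub>F l\<^esub> y l)) L" .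
  have "\<ominus>\<^bsub>F l\<^esub> y l \<in> carrier (F l)" if "l \<in> L" for l
  proof -
    interpret Lm: module R "F l" by (rule module_F)
    show ?thesis using assms(3) that by simp
  qed
  then show ?thesis
    unfolding Im_F_def sum_eq using assms(1,2)
    by (intro CollectI exI[of _ L] exI[of _ "\<lambda>l. \<ominus>\<^bsub>F l\<^esub> y l"]) auto
qed

lemma rel_vec_closed: "k < l \<Longrightarrow> a \<in> carrier (F k) \<Longrightarrow> rel_vec F f (k, l, a) m \<in> carrier (F m)"
proof -
  assume "k < l" "a \<in> carrier (F k)"
  interpret M: module R "F m" by (rule module_F)
  interpret L: module R "F l" by (rule module_F)
  show ?thesis using \<open>k < l\<close> \<open>a \<in> carrier (F k)\<close> map_closed[of k l a] by auto
qed

lemma rel_sum_closed: "valid_rels F T gs \<Longrightarrow> rel_sum F f gs m \<in> carrier (F m)"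
proof (induction gs)
  case Nil
  interpret M: module R "F m" by (rule module_F)
  show ?case by simp
next
  case (Cons g gs)
  interpret M: module R "F m" by (rule module_F)
  obtain k l a where "g = (k, l, a)" by (cases g)
  with Cons rel_vec_closed[of k l a m] show ?case by auto
qed

lemma rel_sum_append:
  assumes "valid_rels F T gs" "valid_rels F T hs"
  shows "rel_sum F f (gs @ hs) m = rel_sum F f gs m \<oplus>\<^bsub>F m\<^esub> rel_sum F f hs m"
  using assms(1)
proof (induction gs)
  case Nil
  interpret M: module R "F m" by (rule module_F)
  show ?case using rel_sum_closed[OF assms(2)] by simp
next
  case (Cons g gs)
  interpret M: module R "F m" by (rule module_F)
  obtain k l a where g: "g = (k, l, a)" by (cases g)
  with Cons have "valid_rels F T gs" "rel_vec F f g m \<in> carrier (F m)"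
    using rel_vec_closed by auto
  with Cons show ?case
    using rel_sum_closed[of T gs m] rel_sum_closed[OF assms(2), of m] by (simp add: M.a_assoc)
qed

lemma valid_rels_smult:
  assumes "valid_rels F T gs" "c \<in> carrier R"
  shows "valid_rels F T (map (\<lambda>(k, l, a). (k, l, c \<odot>\<^bsub>F k\<^esub> a)) gs)"
  using assms module.smult_closed[OF module_F] by (auto simp: valid_rels_def)

lemma rel_sum_smult:
  assumes "valid_rels F T gs" "c \<in> carrier R"
  shows "rel_sum F f (map (\<lambda>(k, l, a). (k, l, c \<odot>\<^bsub>F k\<^esub> a)) gs) m = c \<odot>\<^bsub>F m\<^esub> rel_sum F f gs m"
  using assms(1)
proof (induction gs)
  case Nil
  interpret M: module R "F m" by (rule module_F)
  show ?case using assms(2) by simp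
next
  case (Cons g gs)
  interpret M: module R "F m" by (rule module_F)
  obtain k l a where g: "g = (k, l, a)" by (cases g)
  with Cons.prems have kl: "k < l" and a: "a \<in> carrier (F k)" and gs: "valid_rels F T gs" by auto
  interpret L: module R "F l" by (rule module_F)
  have "rel_vec F f (k, l, c \<odot>\<^bsub>F k\<^esub> a) m = c \<odot>\<^bsub>F m\<^esub> rel_vec F f (k, l, a) m"
    using kl a assms(2) map_smult[of k l c a] map_closed[of k l a] L.smult_r_minus[of c "f k l a"]
    by auto
  then show ?case
    using Cons.IH[OF gs] g rel_vec_closed[OF kl a, of m] rel_sum_closed[OF gs, of m] assms(2)
    by (simp add: M.smult_r_distr)
qed

lemma colim_rel_imp_rel_sum:
  assumes "x \<in> colim_rel R F f j"
  shows "\<exists>gs. valid_rels F (\<lambda>l. l < j) gs \<and> x = rel_sum F f gs"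
  using assms
proof (induction rule: colim_rel.induct)
  case zero
  have "(\<lambda>m. \<zero>\<^bsub>F m\<^esub>) = rel_sum F f []" by auto
  then show ?case by (metis valid_rels_simps(1))
next
  case (gen k l a)
  have "(\<lambda>m. if m = k then a else if m = l then \<ominus>\<^bsub>F l\<^esub> f k l a else \<zero>\<^bsub>F m\<^esub>) = rel_sum F f [(k, l, a)]"
  proof
    fix m
    interpret M: module R "F m" by (rule module_F)
    show "(if m = k then a else if m = l then \<ominus>\<^bsub>F l\<^esub> f k l a else \<zero>\<^bsub>F m\<^esub>) = rel_sum F f [(k, l, a)] m"
      using rel_vec_closed[OF gen(1,3), of m] by simp
  qed
  with gen show ?case by (intro exI[of _ "[(k, l, a)]"]) auto
next
  case (add x y)
  then obtain gs hs where "valid_rels F (\<lambda>l. l < j) gs" "x = rel_sum F f gs"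
    and "valid_rels F (\<lambda>l. l < j) hs" "y = rel_sum F f hs" by blast
  then show ?case using rel_sum_append by (intro exI[of _ "gs @ hs"]) auto
next
  case (smult c x)
  then obtain gs where "valid_rels F (\<lambda>l. l < j) gs" "x = rel_sum F f gs" by blast
  with smult(1) show ?case
    using valid_rels_smult rel_sum_smult
    by (intro exI[of _ "map (\<lambda>(k, l, a). (k, l, c \<odot>\<^bsub>F k\<^esub> a)) gs"]) auto
qed

lemma rel_sum_filter:
  assumes "valid_rels F T gs"
  shows "rel_sum F f gs m = rel_sum F f (filter p gs) m \<oplus>\<^bsub>F m\<^esub> rel_sum F f (filter (\<lambda>g. \<not> p g) gs) m"
  using assms
proof (induction gs)
  case Nil
  interpret M: module R "F m" by (rule module_F)
  show ?case by simp
next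
  case (Cons g gs)
  interpret M: module R "F m" by (rule module_F)
  obtain k l a where g: "g = (k, l, a)" by (cases g)
  with Cons.prems have gs: "valid_rels F T gs" and "rel_vec F f g m \<in> carrier (F m)"
    using rel_vec_closed by auto
  moreover have "rel_sum F f (filter q gs) m \<in> carrier (F m)" for q
    by (rule rel_sum_closed[OF valid_rels_filter[OF gs]])
  ultimately show ?case
    using Cons.IH[OF gs] by (cases "p g") (simp_all add: M.a_assoc M.a_lcomm)
qed

lemma rel_sum_eq_zero:
  assumes "\<forall>(k, l, a) \<in> set gs. k \<noteq> m \<and> l \<noteq> m"
  shows "rel_sum F f gs m = \<zero>\<^bsub>F m\<^esub>"
  using assms
proof (induction gs)
  case (Cons g gs)
  interpret M: module R "F m" by (rule module_F)
  obtain k l a where "g = (k, l, a)" by (cases g)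
  with Cons have "k \<noteq> m" "l \<noteq> m" "rel_sum F f gs m = \<zero>\<^bsub>F m\<^esub>" by auto
  with \<open>g = (k, l, a)\<close> show ?case by simp
qed simp

lemma rel_sum_single_target_eq_zero:
  assumes "\<forall>g\<in>set P. rel_target g = m" "n \<noteq> m" "n \<notin> fst ` set P"
  shows "rel_sum F f P n = \<zero>\<^bsub>F n\<^esub>"
  using assms by (intro rel_sum_eq_zero) force

lemma rel_sum_at_maximal_target:
  assumes "valid_rels F T gs" "\<forall>g\<in>set gs. \<not> m < rel_target g"
  shows "rel_sum F f gs m = rel_sum F f (filter (\<lambda>g. rel_target g = m) gs) m"
proof -
  interpret M: module R "F m" by (rule module_F)
  have "rel_sum F f (filter (\<lambda>g. rel_target g \<noteq> m) gs) m = \<zero>\<^bsub>F m\<^esub>"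
    using assms by (intro rel_sum_eq_zero) (force dest: valid_rels_memD)
  then show ?thesis
    using rel_sum_filter[OF assms(1), of m "\<lambda>g. rel_target g = m"]
      rel_sum_closed[OF valid_rels_filter[OF assms(1)]] by simp
qed

lemma finsum_map_rel_vec:
  assumes "finite S" "S \<subseteq> {k. k < m}" "k0 \<in> S" "a \<in> carrier (F k0)"
  shows "finsum (F m) (\<lambda>k. f k m (rel_vec F f (k0, m, a) k)) S = f k0 m a"
proof -
  interpret M: module R "F m" by (rule module_F)
  have "k0 \<le> m" using assms(2,3) by auto
  then have "f k0 m a \<in> carrier (F m)" using assms(4) by (rule map_closed)
  have "finsum (F m) (\<lambda>k. f k m (rel_vec F f (k0, m, a) k)) S
      = finsum (F m) (\<lambda>k. if k0 = k then f k0 m a else \<zero>\<^bsub>F m\<^esub>) S"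
    using assms map_zero map_closed \<open>f k0 m a \<in> carrier (F m)\<close> by (intro M.finsum_cong') auto
  also have "\<dots> = f k0 m a"
    using assms \<open>f k0 m a \<in> carrier (F m)\<close> M.finsum_singleton[of k0 S "\<lambda>_. f k0 m a"] by auto
  finally show ?thesis .
qed

lemma finsum_map_rel_sum:
  assumes "valid_rels F T P" "\<forall>g\<in>set P. rel_target g = m"
    and "finite S" "fst ` set P \<subseteq> S" "S \<subseteq> {k. k < m}"
  shows "finsum (F m) (\<lambda>k. f k m (rel_sum F f P k)) S = \<ominus>\<^bsub>F m\<^esub> rel_sum F f P m"
  using assms(1,2,4)
proof (induction P)
  case Nil
  interpret M: module R "F m" by (rule module_F)
  have "finsum (F m) (\<lambda>k. f k m (rel_sum F f [] k)) S = finsum (F m) (\<lambda>k. \<zero>\<^bsub>F m\<^esub>) S"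
    using assms(5) map_zero by (intro M.finsum_cong') auto
  then show ?case by simp
next
  case (Cons g P)
  interpret M: module R "F m" by (rule module_F)
  obtain k0 a where g: "g = (k0, m, a)" using Cons.prems(2) by (cases g) auto
  with Cons.prems have k0: "k0 < m" "k0 \<in> S" and a: "a \<in> carrier (F k0)" and P: "valid_rels F T P"
    by auto
  have g_closed: "rel_vec F f g k \<in> carrier (F k)" for k
    unfolding g by (rule rel_vec_closed[OF k0(1) a])
  have closed: "f k m (rel_vec F f g k) \<in> carrier (F m)" "f k m (rel_sum F f P k) \<in> carrier (F m)"
    if "k \<in> S" for k
    using that assms(5) map_closed g_closed rel_sum_closed[OF P] by auto
  have "finsum (F m) (\<lambda>k. f k m (rel_sum F f (g # P) k)) S
      = finsum (F m) (\<lambda>k. f k m (rel_vec F f g k) \<oplus>\<^bsub>F m\<^esub> f k m (rel_sum F f P k)) S"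
    using assms(5) closed by (intro M.finsum_cong') (auto intro!: map_add g_closed rel_sum_closed[OF P])
  also have "\<dots> = finsum (F m) (\<lambda>k. f k m (rel_vec F f g k)) S \<oplus>\<^bsub>F m\<^esub>
      finsum (F m) (\<lambda>k. f k m (rel_sum F f P k)) S"
    using closed by (intro M.finsum_addf) auto
  also have "\<dots> = f k0 m a \<oplus>\<^bsub>F m\<^esub> \<ominus>\<^bsub>F m\<^esub> rel_sum F f P m"
    using finsum_map_rel_vec[OF assms(3,5) k0(2) a] Cons.IH P Cons.prems g by auto
  also have "\<dots> = \<ominus>\<^bsub>F m\<^esub> (\<ominus>\<^bsub>F m\<^esub> f k0 m a \<oplus>\<^bsub>F m\<^esub> rel_sum F f P m)"
    using map_closed[of k0 m a] k0(1) a rel_sum_closed[OF P, of m]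
    by (simp add: M.minus_add)
  also have "\<dots> = \<ominus>\<^bsub>F m\<^esub> rel_sum F f (g # P) m"
    using g k0(1) by auto
  finally show ?case .
qed

lemma kernel_is_rel_sum:
  assumes "colim_map_inj R F f j" "finite S" "S \<subseteq> {k. k < j}"
    and "\<And>k. x k \<in> carrier (F k)" "\<And>k. k \<notin> S \<Longrightarrow> x k = \<zero>\<^bsub>F k\<^esub>"
    and "finsum (F j) (\<lambda>k. f k j (x k)) S = \<zero>\<^bsub>F j\<^esub>"
  shows "\<exists>gs. valid_rels F (\<lambda>l. l < j) gs \<and> x = rel_sum F f gs"
proof -
  interpret J: module R "F j" by (rule module_F)
  have supp: "{k. x k \<noteq> \<zero>\<^bsub>F k\<^esub>} \<subseteq> S" using assms(5) by blast
  have "x \<in> dsum_below F j"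
    unfolding dsum_below_def using assms(2-5) supp finite_subset by blast
  moreover have "finsum (F j) (\<lambda>k. f k j (x k)) {k. x k \<noteq> \<zero>\<^bsub>F k\<^esub>} = finsum (F j) (\<lambda>k. f k j (x k)) S"
    using assms(3,4) map_zero map_closed
    by (intro J.add.finprod_mono_neutral_cong_left[OF assms(2) supp]) auto
  ultimately have "x \<in> colim_rel R F f j"
    using assms(1,6) unfolding colim_map_inj_def by simp
  then show ?thesis by (rule colim_rel_imp_rel_sum)
qed

lemma single_target_rel_sum_retarget:
  assumes "colim_map_inj R F f m" "valid_rels F T P" "\<forall>g\<in>set P. rel_target g = m"
    and "rel_sum F f P m = \<zero>\<^bsub>F m\<^esub>"
  shows "\<exists>hs. valid_rels F (\<lambda>l. l < m) hs \<and> rel_sum F f P = rel_sum F f hs"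
proof -
  interpret M: module R "F m" by (rule module_F)
  let ?S = "fst ` set P"
  have S: "finite ?S" "?S \<subseteq> {k. k < m}" using assms(2,3) by (force dest: valid_rels_memD)+
  show ?thesis
  proof (rule kernel_is_rel_sum[where x = "rel_sum F f P", OF assms(1) S])
    show "rel_sum F f P k \<in> carrier (F k)" for k by (rule rel_sum_closed[OF assms(2)])
    show "rel_sum F f P k = \<zero>\<^bsub>F k\<^esub>" if "k \<notin> ?S" for k
      using assms(3,4) that rel_sum_single_target_eq_zero by (cases "k = m") auto
    show "finsum (F m) (\<lambda>k. f k m (rel_sum F f P k)) ?S = \<zero>\<^bsub>F m\<^esub>"
      using finsum_map_rel_sum[OF assms(2,3) S(1) order_refl S(2)] assms(4) by simp
  qed
qed

lemma single_target_rel_sum_in_Im_F: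
  assumes "valid_rels F T P" "\<forall>g\<in>set P. rel_target g = m"
  shows "rel_sum F f P m \<in> Im_F F f m"
proof -
  interpret M: module R "F m" by (rule module_F)
  let ?S = "fst ` set P"
  have S: "finite ?S" "?S \<subseteq> {k. k < m}" using assms by (force dest: valid_rels_memD)+
  have "rel_sum F f P m = \<ominus>\<^bsub>F m\<^esub> finsum (F m) (\<lambda>l. f l m (rel_sum F f P l)) ?S"
    using finsum_map_rel_sum[OF assms S(1) order_refl S(2)] rel_sum_closed[OF assms(1)] by simp
  then show ?thesis
    using neg_finsum_in_Im_F[OF S] rel_sum_closed[OF assms(1)] by simp
qed

lemma rel_sum_split_max_target:
  assumes "valid_rels F T gs" "gs \<noteq> []"
  obtains m P Q where "m \<in> rel_target ` set gs" "valid_rels F T P" "\<forall>g\<in>set P. rel_target g = m"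
    and "valid_rels F T Q" "\<And>n. rel_sum F f gs n = rel_sum F f P n \<oplus>\<^bsub>F n\<^esub> rel_sum F f Q n"
    and "rel_sum F f gs m = rel_sum F f P m"
    and "\<And>hs. \<forall>h\<in>set hs. rel_target h < m \<Longrightarrow>
      (mset (map rel_target (Q @ hs)), mset (map rel_target gs)) \<in> mult {(a, b). a < b}"
proof -
  obtain m where m: "m \<in> rel_target ` set gs" and m_max: "\<forall>g\<in>set gs. \<not> m < rel_target g"
    using finite_has_maximal[of "rel_target ` set gs"] assms(2) by (auto simp: less_le)
  show ?thesis
  proof (rule that[OF m])
    show "valid_rels F T (filter (\<lambda>g. rel_target g = m) gs)"
      "valid_rels F T (filter (\<lambda>g. rel_target g \<noteq> m) gs)"
      using valid_rels_filter[OF assms(1)] by auto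
    show "rel_sum F f gs n = rel_sum F f (filter (\<lambda>g. rel_target g = m) gs) n \<oplus>\<^bsub>F n\<^esub>
        rel_sum F f (filter (\<lambda>g. rel_target g \<noteq> m) gs) n" for n
      by (rule rel_sum_filter[OF assms(1)])
    show "rel_sum F f gs m = rel_sum F f (filter (\<lambda>g. rel_target g = m) gs) m"
      by (rule rel_sum_at_maximal_target[OF assms(1) m_max])
    show "(mset (map rel_target (filter (\<lambda>g. rel_target g \<noteq> m) gs @ hs)), mset (map rel_target gs))
        \<in> mult {(a, b). a < b}" if "\<forall>h\<in>set hs. rel_target h < m" for hs
      by (rule mult_replace_filtered[OF m that])
  qed auto
qed

lemma rel_sum_in_Im_F_if_vanishes_above:
  assumes wf: "wf {(a, b). (a::'p) < b}" and inj: "\<forall>l\<le>i. colim_map_inj R F f l"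
  shows "valid_rels F (\<lambda>l. l \<le> i) gs \<Longrightarrow> \<forall>l. k < l \<longrightarrow> rel_sum F f gs l = \<zero>\<^bsub>F l\<^esub> \<Longrightarrow>
    rel_sum F f gs k \<in> Im_F F f k"
  using wf_inv_image[OF wf_mult[OF wf], of "\<lambda>gs. mset (map rel_target gs)"]
proof (induction gs rule: wf_induct_rule)
  case (less gs)
  show ?case
  proof (cases "gs = []")
    case True
    then show ?thesis by (simp add: zero_in_Im_F)
  next
    case False
    obtain m P Q where m: "m \<in> rel_target ` set gs"
      and P: "valid_rels F (\<lambda>l. l \<le> i) P" "\<forall>g\<in>set P. rel_target g = m"
      and Q: "valid_rels F (\<lambda>l. l \<le> i) Q"
      and split: "\<And>n. rel_sum F f gs n = rel_sum F f P n \<oplus>\<^bsub>F n\<^esub> rel_sum F f Q n"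
      and gs_m: "rel_sum F f gs m = rel_sum F f P m"
      and decrease: "\<And>hs. \<forall>h\<in>set hs. rel_target h < m \<Longrightarrow>
        (mset (map rel_target (Q @ hs)), mset (map rel_target gs)) \<in> mult {(a, b). a < b}"
      using rel_sum_split_max_target[OF less.prems(1) False] by blast
    have m_le_i: "m \<le> i" using m less.prems(1) by (force dest: valid_rels_memD)
    show ?thesis
    proof (cases "rel_sum F f P m = \<zero>\<^bsub>F m\<^esub>")
      case True
      then obtain hs where hs: "valid_rels F (\<lambda>l. l < m) hs" "rel_sum F f P = rel_sum F f hs"
        using single_target_rel_sum_retarget[OF inj[rule_format, OF m_le_i] P] by blast
      have hs_valid: "valid_rels F (\<lambda>l. l \<le> i) hs"
        by (rule valid_rels_mono[OF hs(1)]) (metis m_le_i less_le_trans less_imp_le)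
      have same: "rel_sum F f (Q @ hs) n = rel_sum F f gs n" for n
      proof -
        interpret N: module R "F n" by (rule module_F)
        show ?thesis
          using rel_sum_append[OF Q hs_valid] split hs(2) rel_sum_closed[OF Q] rel_sum_closed[OF hs_valid]
          by (simp add: N.a_comm)
      qed
      have hs_below: "\<forall>h\<in>set hs. rel_target h < m" using hs(1) by (force dest: valid_rels_memD)
      show ?thesis
        using less.IH[of "Q @ hs"] decrease[OF hs_below] same less.prems(2) Q hs_valid by simp
    next
      case False
      consider "k = m" | "k < m" | "\<not> k \<le> m" by (auto simp: less_le)
      then show ?thesis
      proof cases
        case 1
        then show ?thesis using gs_m single_target_rel_sum_in_Im_F[OF P] by simp
      next
        case 2
        with False gs_m less.prems(2) show ?thesis by simp
      next
        case 3
        have P_zero: "rel_sum F f P l = \<zero>\<^bsub>F l\<^esub>" if "k \<le> l" for l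
          using 3 that P by (intro rel_sum_single_target_eq_zero) (force dest: valid_rels_memD)+
        have "rel_sum F f Q l = rel_sum F f gs l" if "k \<le> l" for l
        proof -
          interpret N: module R "F l" by (rule module_F)
          show ?thesis using split[of l] P_zero[OF that] rel_sum_closed[OF Q] by simp
        qed
        with less.IH[of Q] decrease[of "[]"] less.prems(2) Q show ?thesis by simp
      qed
    qed
  qed
qed

lemma top_component_in_Im_F:
  assumes "finite J" "J \<subseteq> {k. k \<le> j}" "j \<in> J" "\<forall>k\<in>J. x k \<in> carrier (F k)"
    and "finsum (F j) (\<lambda>k. f k j (x k)) J = \<zero>\<^bsub>F j\<^esub>"
  shows "x j \<in> Im_F F f j"
proof -
  interpret Mj: module R "F j" by (rule module_F)
  let ?L = "J - {j}"
  have L: "finite ?L" "?L \<subseteq> {l. l < j}" "\<forall>l\<in>?L. x l \<in> carrier (F l)"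
    using assms(1,2,4) by (auto simp: less_le)
  have L_closed: "(\<lambda>l. f l j (x l)) \<in> ?L \<rightarrow> carrier (F j)" using L map_closed by auto
  have x_j: "x j \<in> carrier (F j)" using assms(3,4) by auto
  have "finsum (F j) (\<lambda>l. f l j (x l)) J = f j j (x j) \<oplus>\<^bsub>F j\<^esub> finsum (F j) (\<lambda>l. f l j (x l)) ?L"
    using Mj.finsum_insert[OF L(1), of j "\<lambda>l. f l j (x l)"] L_closed x_j map_closed[of j j "x j"]
      insert_Diff[OF assms(3)] by simp
  then have "x j \<oplus>\<^bsub>F j\<^esub> finsum (F j) (\<lambda>l. f l j (x l)) ?L = \<zero>\<^bsub>F j\<^esub>"
    using assms(5) map_id[OF x_j] by simp
  then have "x j = \<ominus>\<^bsub>F j\<^esub> finsum (F j) (\<lambda>l. f l j (x l)) ?L"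
    using L_closed x_j by (intro Mj.minus_equality[symmetric]) auto
  then show ?thesis using neg_finsum_in_Im_F[OF L] by simp
qed

lemma pseudo_projective_if_colim_maps_inj:
  assumes wf: "wf {(a, b). (a::'p) < b}" and inj: "\<forall>l\<le>j. colim_map_inj R F f l"
  shows "pseudo_projective F f j"
  unfolding pseudo_projective_def
proof (intro allI impI ballI)
  fix J x k
  assume J: "finite J" "J \<subseteq> {k. k \<le> j}" and x: "\<forall>k\<in>J. x k \<in> carrier (F k)"
    and sum: "finsum (F j) (\<lambda>k. f k j (x k)) J = \<zero>\<^bsub>F j\<^esub>"
    and k: "k \<in> J" "\<forall>l\<in>J. \<not> k < l"
  interpret Mj: module R "F j" by (rule module_F)
  show "x k \<in> Im_F F f k"
  proof (cases "j \<in> J")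
    case True
    then have "k = j" using k J(2) by (auto simp: less_le)
    with True show ?thesis using top_component_in_Im_F J x sum by blast
  next
    case False
    define x' where "x' n = (if n \<in> J then x n else \<zero>\<^bsub>F n\<^esub>)" for n
    have J_below: "J \<subseteq> {l. l < j}" using J(2) False by (auto simp: less_le)
    have x'_closed: "x' n \<in> carrier (F n)" for n
    proof -
      interpret N: module R "F n" by (rule module_F)
      show ?thesis using x by (simp add: x'_def)
    qed
    have x'_zero: "x' n = \<zero>\<^bsub>F n\<^esub>" if "n \<notin> J" for n
      using that by (simp add: x'_def)
    have "finsum (F j) (\<lambda>l. f l j (x' l)) J = finsum (F j) (\<lambda>l. f l j (x l)) J"
      by (intro Mj.finsum_cong') (use J_below x map_closed in \<open>auto simp: x'_def\<close>)
    also have "\<dots> = \<zero>\<^bsub>F j\<^esub>" by (rule sum)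
    finally obtain gs where gs: "valid_rels F (\<lambda>l. l < j) gs" "x' = rel_sum F f gs"
      using kernel_is_rel_sum[OF inj[rule_format, OF order_refl] J(1) J_below x'_closed x'_zero] by blast
    have "rel_sum F f gs k \<in> Im_F F f k"
    proof (rule rel_sum_in_Im_F_if_vanishes_above[OF wf inj])
      show "valid_rels F (\<lambda>l. l \<le> j) gs" using valid_rels_mono[OF gs(1)] by simp
      show "\<forall>l. k < l \<longrightarrow> rel_sum F f gs l = \<zero>\<^bsub>F l\<^esub>"
        using k(2) x'_zero gs(2) by auto
    qed
    moreover have "x k = x' k" using k(1) by (simp add: x'_def)
    ultimately show ?thesis using gs(2) by simp
  qed
qed

end

theorem lemma6p3:
  fixes R :: "('r, 'c) ring_scheme"
    and F :: "'p::order \<Rightarrow> ('r, 'b) module"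
    and f :: "'p \<Rightarrow> 'p \<Rightarrow> 'b \<Rightarrow> 'b"
    and i :: 'p
  assumes "cring R"
    and "dcc TYPE('p)"
    and "poset_functor R F f"
    and "\<forall>j. j \<le> i \<longrightarrow> colim_map_inj R F f j"
  shows "\<forall>j. j \<le> i \<longrightarrow> pseudo_projective F f j"
proof -
  interpret module_functor R F f by (rule module_functor.intro) (fact assms(3))
  show ?thesis
  proof (intro allI impI)
    fix j
    assume "j \<le> i"
    then have "\<forall>l\<le>j. colim_map_inj R F f l" using assms(4) order_trans by blast
    then show "pseudo_projective F f j"
      by (rule pseudo_projective_if_colim_maps_inj[OF dcc_imp_wf_less[OF assms(2)]])
  qed
qed

end
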